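(* For every field $\mathbb{F}$, $n,d,e\ge1$ and tensors $A:[n]^{2d}\to\mathbb{F}$, $B:[n]^{2e}\to\mathbb{F}$, we have $\rho(A\otimes B)\le n^{-1}\min\{\rho(A),\rho(B)\}$, where $A\otimes B:[n]^{2(d+e)}\to\mathbb{F}$, $(A\otimes B)(x,y)=A(x)B(y)$.
   Context: For a tensor $C:[n]^{2m}\to\mathbb{F}$, $a,b\in\{0,1\}$, $\alpha\in\{0,1\}^{m-1}$: $I_{a,\alpha,b}=[2m]\cap\{a,2+\alpha_1,4+\alpha_2,\dots,2m-2+\alpha_{m-1},2m+b\}$, $J_{a,\alpha,b}=[2m]\cap\{1-a,3-\alpha_1,\dots,2m-1-\alpha_{m-1},2m+1-b\}$ (a partition of $[2m]$); $\mathrm{Mat}_{I,J}(C)$ is the flattening with rows indexed by coordinates in $I$ and columns by those in $J$; $\mathrm{relrk}_{a,\alpha,b}(C)=n^{-m}\mathrm{rank}\,\mathrm{Mat}_{I_{a,\alpha,b},J_{a,\alpha,b}}(C)$; and $\rho(C)=\max_{a,b\in\{0,1\}}\min\sum_{\alpha\in\{0,1\}^{m-1}}\mathrm{relrk}_{a,\alpha,b}(X_\alpha)$, the minimum over families $X_\alpha:[n]^{2m}\to\mathbb{F}$ with $C=\sum_\alpha X_\alpha$. *)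

theory Defs
  imports Complex_Main "HOL-Library.Function_Algebras"
begin

text \<open>A tensor [n]^{2m} -> F is a function (nat => nat) => F, of which only the values on
  asg n {1..2m} matter (coordinates are numbered 1..2m).\<close>
definition asg :: "nat \<Rightarrow> nat set \<Rightarrow> (nat \<Rightarrow> nat) set" where
  "asg n S = {x. (\<forall>i\<in>S. x i < n) \<and> (\<forall>i. i \<notin> S \<longrightarrow> x i = 0)}"

definition merge :: "nat set \<Rightarrow> (nat \<Rightarrow> nat) \<Rightarrow> (nat \<Rightarrow> nat) \<Rightarrow> (nat \<Rightarrow> nat)" where
  "merge I r c = (\<lambda>i. if i \<in> I then r i else c i)"

definition mrank :: "('r \<Rightarrow> 'c \<Rightarrow> 'a::field) \<Rightarrow> 'r set \<Rightarrow> 'c set \<Rightarrow> nat" where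
  "mrank M Rs Cs = vector_space.dim (\<lambda>(s::'a) f x. s * f x)
      ((\<lambda>r. \<lambda>c. if c \<in> Cs then M r c else 0) ` Rs)"

definition alphas :: "nat \<Rightarrow> (nat \<Rightarrow> nat) set" where
  "alphas m = {\<alpha>. (\<forall>k\<in>{1..m-1}. \<alpha> k \<in> {0,1}) \<and> (\<forall>k. k \<notin> {1..m-1} \<longrightarrow> \<alpha> k = 0)}"

definition Iset :: "nat \<Rightarrow> nat \<Rightarrow> (nat \<Rightarrow> nat) \<Rightarrow> nat \<Rightarrow> nat set" where
  "Iset m a \<alpha> b = {1..2*m} \<inter> ({a, 2*m + b} \<union> {2*k + \<alpha> k | k. k \<in> {1..m-1}})"

definition Jset :: "nat \<Rightarrow> nat \<Rightarrow> (nat \<Rightarrow> nat) \<Rightarrow> nat \<Rightarrow> nat set" where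
  "Jset m a \<alpha> b = {1..2*m} \<inter> ({1 - a, 2*m + 1 - b} \<union> {2*k + 1 - \<alpha> k | k. k \<in> {1..m-1}})"

definition relrk :: "nat \<Rightarrow> nat \<Rightarrow> nat \<Rightarrow> (nat \<Rightarrow> nat) \<Rightarrow> nat \<Rightarrow> ((nat \<Rightarrow> nat) \<Rightarrow> 'a::field) \<Rightarrow> real" where
  "relrk n m a \<alpha> b C =
     real (mrank (\<lambda>r c. C (merge (Iset m a \<alpha> b) r c)) (asg n (Iset m a \<alpha> b)) (asg n (Jset m a \<alpha> b)))
     / real n ^ m"

definition rho :: "nat \<Rightarrow> nat \<Rightarrow> ((nat \<Rightarrow> nat) \<Rightarrow> 'a::field) \<Rightarrow> real" where
  "rho n m C = (MAX a\<in>{0,1::nat}. MAX b\<in>{0,1::nat}.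
      Inf {\<Sum>\<alpha>\<in>alphas m. relrk n m a \<alpha> b (X \<alpha>) | X.
             \<forall>x\<in>asg n {1..2*m}. C x = (\<Sum>\<alpha>\<in>alphas m. X \<alpha> x)})"

definition tprod :: "nat \<Rightarrow> nat \<Rightarrow> ((nat \<Rightarrow> nat) \<Rightarrow> 'a::field) \<Rightarrow> ((nat \<Rightarrow> nat) \<Rightarrow> 'a) \<Rightarrow> ((nat \<Rightarrow> nat) \<Rightarrow> 'a)" where
  "tprod d e A B = (\<lambda>z. A (\<lambda>i. if i \<in> {1..2*d} then z i else 0)
                      * B (\<lambda>i. if i \<in> {1..2*e} then z (2*d + i) else 0))"

end

(* Fix the end bits a and b, and take any decomposition A = sum X_alpha used for the end bits
   (a, 1-b) of A. The tensors X_alpha (x) B decompose A (x) B, indexed by the patterns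
   alpha' = (alpha, 1-b, 0, ..., 0) of length d+e-1. On the first 2d coordinates the
   (a, alpha', b)-flattening splits them exactly as the (a, alpha, 1-b)-flattening does, while
   on the last 2e coordinates it follows the pattern (1-b, 0, ..., 0, b), which puts only e-1
   of them on one side. So the flattening of X_alpha (x) B is the entrywise product of a
   reindexed flattening of X_alpha with a matrix of rank at most n^(e-1), while the
   normalisation grows by n^e: every relative rank drops by a factor n. Symmetrically, the
   patterns (0, ..., 0, 1-a, beta) transfer decompositions of B. *)

theory Submission
  imports Defs "HOL-Library.FuncSet"
begin

section \<open>Ranks of entrywise products\<close>

lemma sum_apply: "(\<Sum>j\<in>F. f j) x = (\<Sum>j\<in>F. f j x)"
  by (induction F rule: infinite_finite_induct) auto

lemma vector_space_pointwise_scale: "vector_space (\<lambda>(s::'a::field) (f::'c \<Rightarrow> 'a) x. s * f x)"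
  by unfold_locales (auto simp: algebra_simps fun_eq_iff)

lemma mrank_hadamard_le:
  fixes P :: "'r' \<Rightarrow> 'c' \<Rightarrow> 'a::field" and M :: "'r \<Rightarrow> 'c \<Rightarrow> 'a"
  assumes "finite RP" "finite F" "\<phi> ` Rs \<subseteq> RP" "\<psi> ` Cs \<subseteq> CP"
    and M: "\<And>r c. r \<in> Rs \<Longrightarrow> c \<in> Cs \<Longrightarrow> M r c = (\<Sum>j\<in>F. h r j * k j c) * P (\<phi> r) (\<psi> c)"
  shows "mrank M Rs Cs \<le> card F * mrank P RP CP"
proof -
  interpret V: vector_space "\<lambda>(s::'a) (f::'c' \<Rightarrow> 'a) x. s * f x"
    by (rule vector_space_pointwise_scale)
  interpret W: vector_space "\<lambda>(s::'a) (f::'c \<Rightarrow> 'a) x. s * f x"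
    by (rule vector_space_pointwise_scale)
  define row where "row r = (\<lambda>c. if c \<in> CP then P r c else 0)" for r
  obtain Bas where Bas: "Bas \<subseteq> row ` RP" "row ` RP \<subseteq> V.span Bas" "card Bas = V.dim (row ` RP)"
    by (rule V.basis_exists)
  have "finite Bas" using Bas(1) \<open>finite RP\<close> by (meson finite_imageI finite_subset)
  text \<open>Row r of M is the combination with coefficients h r j of the images of row (\<phi> r) of P
    under the linear maps T j, so the images of a basis of the rows of P span the rows of M.\<close>
  define T where "T j u = (\<lambda>c. if c \<in> Cs then k j c * u (\<psi> c) else 0)" for j u
  define Ws where "Ws = (\<Union>j\<in>F. T j ` Bas)"
  have T_hom: "module_hom (\<lambda>(s::'a) (f::'c' \<Rightarrow> 'a) x. s * f x) (\<lambda>(s::'a) (f::'c \<Rightarrow> 'a) x. s * f x)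
    (T j)" for j
    by (auto simp: module_hom_def module_hom_axioms_def T_def fun_eq_iff algebra_simps
        V.module_axioms W.module_axioms)
  have "(\<lambda>r. \<lambda>c. if c \<in> Cs then M r c else 0) ` Rs \<subseteq> W.span Ws"
  proof
    fix v assume "v \<in> (\<lambda>r. \<lambda>c. if c \<in> Cs then M r c else 0) ` Rs"
    then obtain r where r: "r \<in> Rs" and v: "v = (\<lambda>c. if c \<in> Cs then M r c else 0)" by blast
    have "v = (\<Sum>j\<in>F. (\<lambda>x. h r j * T j (row (\<phi> r)) x))"
      using assms(4) r
      by (auto simp: v fun_eq_iff sum_apply T_def row_def M sum_distrib_right mult.assoc)
    moreover have "T j (row (\<phi> r)) \<in> W.span Ws" if "j \<in> F" for j
    proof -
      have "row (\<phi> r) \<in> V.span Bas" using Bas(2) assms(3) r by auto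
      then have "T j (row (\<phi> r)) \<in> W.span (T j ` Bas)"
        using module_hom.span_image[OF T_hom] by blast
      also have "W.span (T j ` Bas) \<subseteq> W.span Ws"
        using that unfolding Ws_def by (intro W.span_mono) auto
      finally show ?thesis .
    qed
    ultimately show "v \<in> W.span Ws" by (auto intro: W.span_sum W.span_scale)
  qed
  then have "mrank M Rs Cs \<le> card Ws"
    unfolding mrank_def using \<open>finite Bas\<close> \<open>finite F\<close> by (auto simp: Ws_def intro: W.dim_le_card)
  also have "\<dots> \<le> (\<Sum>j\<in>F. card (T j ` Bas))"
    unfolding Ws_def using \<open>finite F\<close> by (rule card_UN_le)
  also have "\<dots> \<le> (\<Sum>j\<in>F. card Bas)"
    by (intro sum_mono card_image_le \<open>finite Bas\<close>)
  finally show ?thesis using Bas(3) by (simp add: mrank_def row_def)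
qed

lemma mrank_hadamard_factor_le:
  fixes P :: "'r' \<Rightarrow> 'c' \<Rightarrow> 'a::field" and M :: "'r \<Rightarrow> 'c \<Rightarrow> 'a"
  assumes "finite V" "finite W" "f ` Rs \<subseteq> V" "g ` Cs \<subseteq> W"
    and "finite RP" "\<phi> ` Rs \<subseteq> RP" "\<psi> ` Cs \<subseteq> CP"
    and M: "\<And>r c. r \<in> Rs \<Longrightarrow> c \<in> Cs \<Longrightarrow> M r c = G (f r) (g c) * P (\<phi> r) (\<psi> c)"
  shows "mrank M Rs Cs \<le> min (card V) (card W) * mrank P RP CP"
proof -
  have "mrank M Rs Cs \<le> card V * mrank P RP CP"
  proof (rule mrank_hadamard_le[OF \<open>finite RP\<close> \<open>finite V\<close> assms(6,7)])
    show "M r c = (\<Sum>j\<in>V. of_bool (f r = j) * G j (g c)) * P (\<phi> r) (\<psi> c)"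
      if "r \<in> Rs" "c \<in> Cs" for r c
      using that assms(1,3) by (auto simp: M sum.delta)
  qed
  moreover have "mrank M Rs Cs \<le> card W * mrank P RP CP"
  proof (rule mrank_hadamard_le[OF \<open>finite RP\<close> \<open>finite W\<close> assms(6,7)])
    show "M r c = (\<Sum>j\<in>W. G (f r) j * of_bool (g c = j)) * P (\<phi> r) (\<psi> c)"
      if "r \<in> Rs" "c \<in> Cs" for r c
      using that assms(2,4) by (auto simp: M sum.delta)
  qed
  ultimately show ?thesis by (simp add: min_mult_distrib_right)
qed

lemma mrank_zero: "mrank (\<lambda>r c. 0 :: 'a::field) Rs Cs = 0"
proof -
  interpret W: vector_space "\<lambda>(s::'a) (f::'c \<Rightarrow> 'a) x. s * f x"
    by (rule vector_space_pointwise_scale)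
  have "(\<lambda>r. \<lambda>c. if c \<in> Cs then 0 else 0) ` Rs \<subseteq> W.span {}"
    using W.span_zero by (auto simp: zero_fun_def)
  from W.dim_le_card[OF this] show ?thesis by (simp add: mrank_def)
qed

lemma finite_asg: "finite S \<Longrightarrow> finite (asg n S)"
  and card_asg_le: "finite S \<Longrightarrow> card (asg n S) \<le> n ^ card S"
proof -
  assume "finite S"
  have "inj_on (\<lambda>x. restrict x S) (asg n S)"
    by (rule inj_onI) (simp add: asg_def fun_eq_iff restrict_def, metis)
  moreover have "(\<lambda>x. restrict x S) ` asg n S \<subseteq> PiE S (\<lambda>_. {..<n})"
    by (auto simp: asg_def)
  moreover have "finite (PiE S (\<lambda>_. {..<n}))" "card (PiE S (\<lambda>_. {..<n})) = n ^ card S"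
    using \<open>finite S\<close> by (simp_all add: finite_PiE card_PiE)
  ultimately show "finite (asg n S)" "card (asg n S) \<le> n ^ card S"
    by (metis finite_imageD finite_subset, metis card_inj_on_le)
qed

definition slice :: "nat \<Rightarrow> nat \<Rightarrow> (nat \<Rightarrow> nat) \<Rightarrow> (nat \<Rightarrow> nat)" where
  "slice s l x = (\<lambda>i. if i \<in> {1..l} then x (s + i) else 0)"

definition slice_set :: "nat \<Rightarrow> nat \<Rightarrow> nat set \<Rightarrow> nat set" where
  "slice_set s l K = {i \<in> {1..l}. s + i \<in> K}"

lemma tprod_eq_slices: "tprod d e A B z = A (slice 0 (2*d) z) * B (slice (2*d) (2*e) z)"
  unfolding tprod_def slice_def by (simp only: add_0)

lemma slice_merge: "slice s l (merge K r c) = merge (slice_set s l K) (slice s l r) (slice s l c)"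
  by (auto simp: slice_def slice_set_def merge_def)

lemma slice_asg: "x \<in> asg n K \<Longrightarrow> slice s l x \<in> asg n (slice_set s l K)"
  by (auto simp: slice_def slice_set_def asg_def)

lemma finite_slice_set: "finite (slice_set s l K)"
  by (simp add: slice_set_def)

lemma mrank_slice_product_le:
  fixes X G :: "(nat \<Rightarrow> nat) \<Rightarrow> 'a::field"
  assumes "n \<ge> 1" and small: "card (slice_set s' l' I) \<le> k \<or> card (slice_set s' l' J) \<le> k"
  shows "mrank (\<lambda>r c. X (slice s l (merge I r c)) * G (slice s' l' (merge I r c)))
      (asg n I) (asg n J)
    \<le> n ^ k * mrank (\<lambda>r c. X (merge (slice_set s l I) r c))
      (asg n (slice_set s l I)) (asg n (slice_set s l J))"
    (is "?lhs \<le> _ * ?rhs")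
proof -
  let ?V = "asg n (slice_set s' l' I)" and ?W = "asg n (slice_set s' l' J)"
  have "?lhs \<le> min (card ?V) (card ?W) * ?rhs"
    by (rule mrank_hadamard_factor_le[where G = "\<lambda>u v. G (merge (slice_set s' l' I) u v)"])
      (auto simp: finite_asg finite_slice_set slice_asg slice_merge mult.commute)
  also have "min (card ?V) (card ?W) \<le> n ^ k"
    using small card_asg_le[OF finite_slice_set] power_increasing[OF _ \<open>n \<ge> 1\<close>]
    by (meson min.coboundedI1 min.coboundedI2 order_trans)
  finally show ?thesis by simp
qed

lemma tprod_sum_left:
  assumes "\<forall>x\<in>asg n {1..2*d}. A x = (\<Sum>\<alpha>\<in>P. X \<alpha> x)"
  shows "\<forall>z\<in>asg n {1..2*(d+e)}. tprod d e A B z = (\<Sum>\<alpha>\<in>P. tprod d e (X \<alpha>) B z)"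
proof
  fix z assume "z \<in> asg n {1..2*(d+e)}"
  moreover have "slice_set 0 (2*d) {1..2*(d+e)} = {1..2*d}"
    by (auto simp: slice_set_def)
  ultimately have "slice 0 (2*d) z \<in> asg n {1..2*d}"
    by (metis slice_asg)
  then show "tprod d e A B z = (\<Sum>\<alpha>\<in>P. tprod d e (X \<alpha>) B z)"
    using assms by (simp add: tprod_eq_slices sum_distrib_right)
qed

lemma tprod_sum_right:
  assumes "\<forall>x\<in>asg n {1..2*e}. B x = (\<Sum>\<beta>\<in>P. X \<beta> x)"
  shows "\<forall>z\<in>asg n {1..2*(d+e)}. tprod d e A B z = (\<Sum>\<beta>\<in>P. tprod d e A (X \<beta>) z)"
proof
  fix z assume "z \<in> asg n {1..2*(d+e)}"
  moreover have "slice_set (2*d) (2*e) {1..2*(d+e)} = {1..2*e}"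
    by (auto simp: slice_set_def)
  ultimately have "slice (2*d) (2*e) z \<in> asg n {1..2*e}"
    by (metis slice_asg)
  then show "tprod d e A B z = (\<Sum>\<beta>\<in>P. tprod d e A (X \<beta>) z)"
    using assms by (simp add: tprod_eq_slices sum_distrib_left)
qed

section \<open>Flattenings as parity patterns\<close>

lemma alphas_eq_0: "\<alpha> \<in> alphas m \<Longrightarrow> k \<notin> {1..m-1} \<Longrightarrow> \<alpha> k = 0"
  unfolding alphas_def by blast

lemma alphas_le_1: "\<alpha> \<in> alphas m \<Longrightarrow> \<alpha> k \<le> 1"
  unfolding alphas_def by (cases "k \<in> {1..m-1}") fastforce+

lemma finite_alphas: "finite (alphas m)"
proof -
  have "alphas m = asg 2 {1..m-1}"
    by (auto simp: alphas_def asg_def less_2_cases_iff)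
  then show ?thesis by (simp add: finite_asg)
qed

text \<open>Coordinates 2k and 2k+1 form the k-th pair (only 1 lies in {1..2m} for k = 0, only 2m for
  k = m). The flattening with bits a, alpha, b puts into the rows the coordinate of each pair whose
  parity is the k-th entry of (a, alpha 1, ..., alpha (m-1), b).\<close>

definition pattern :: "nat \<Rightarrow> nat \<Rightarrow> (nat \<Rightarrow> nat) \<Rightarrow> nat \<Rightarrow> nat \<Rightarrow> nat" where
  "pattern m a \<alpha> b k = (if k = 0 then a else if k = m then b else \<alpha> k)"

definition parity_set :: "nat \<Rightarrow> (nat \<Rightarrow> nat) \<Rightarrow> nat set" where
  "parity_set l \<gamma> = {i \<in> {1..2*l}. i mod 2 = \<gamma> (i div 2)}"

lemma Iset_eq_parity_set:
  assumes "a \<le> 1" "b \<le> 1" "\<And>k. \<alpha> k \<le> 1"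
  shows "Iset m a \<alpha> b = parity_set m (pattern m a \<alpha> b)"
proof (intro set_eqI iffI)
  fix x assume "x \<in> Iset m a \<alpha> b"
  moreover have "\<alpha> k div 2 = 0" "\<alpha> k mod 2 = \<alpha> k" for k
    using assms(3)[of k] by auto
  ultimately show "x \<in> parity_set m (pattern m a \<alpha> b)"
    using assms by (auto simp: Iset_def parity_set_def pattern_def)
next
  fix x assume x: "x \<in> parity_set m (pattern m a \<alpha> b)"
  define k where "k = x div 2"
  have "x = 2 * k + x mod 2"
    by (simp add: k_def)
  moreover have "x mod 2 = pattern m a \<alpha> b k" "1 \<le> x" "x \<le> 2 * m"
    using x by (auto simp: parity_set_def k_def)
  ultimately show "x \<in> Iset m a \<alpha> b"
    unfolding Iset_def pattern_def by (auto split: if_splits)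
qed

lemma Jset_eq_parity_set:
  assumes "b \<le> 1" "\<And>k. \<alpha> k \<le> 1"
  shows "Jset m a \<alpha> b = parity_set m (\<lambda>k. 1 - pattern m a \<alpha> b k)"
proof -
  have "Jset m a \<alpha> b = Iset m (1 - a) (\<lambda>k. 1 - \<alpha> k) (1 - b)"
    using assms by (force simp: Jset_def Iset_def)
  also have "\<dots> = parity_set m (pattern m (1 - a) (\<lambda>k. 1 - \<alpha> k) (1 - b))"
    by (rule Iset_eq_parity_set) auto
  also have "pattern m (1 - a) (\<lambda>k. 1 - \<alpha> k) (1 - b) = (\<lambda>k. 1 - pattern m a \<alpha> b k)"
    by (simp add: pattern_def fun_eq_iff)
  finally show ?thesis .
qed

lemma slice_set_parity_set:
  "s + l \<le> m \<Longrightarrow> slice_set (2*s) (2*l) (parity_set m \<gamma>) = parity_set l (\<lambda>j. \<gamma> (s + j))"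
  by (auto simp: slice_set_def parity_set_def)

lemma parity_set_cong: "(\<And>j. j \<le> l \<Longrightarrow> \<gamma> j = \<gamma>' j) \<Longrightarrow> parity_set l \<gamma> = parity_set l \<gamma>'"
  by (auto simp: parity_set_def)

definition alpha_join :: "nat \<Rightarrow> (nat \<Rightarrow> nat) \<Rightarrow> nat \<Rightarrow> (nat \<Rightarrow> nat) \<Rightarrow> (nat \<Rightarrow> nat)" where
  "alpha_join d \<alpha> v \<beta> = (\<lambda>k. if k < d then \<alpha> k else if k = d then v else \<beta> (k - d))"

lemma alpha_join_alphas:
  assumes "\<alpha> \<in> alphas d" "\<beta> \<in> alphas e" "v \<le> 1" "d \<ge> 1" "e \<ge> 1"
  shows "alpha_join d \<alpha> v \<beta> \<in> alphas (d + e)"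
proof -
  have "alpha_join d \<alpha> v \<beta> k \<le> 1" for k
    using assms alphas_le_1 by (simp add: alpha_join_def)
  moreover have "alpha_join d \<alpha> v \<beta> k = 0" if "k \<notin> {1..d+e-1}" for k
  proof -
    have "k < d \<Longrightarrow> k \<notin> {1..d-1}" "\<not> k \<le> d \<Longrightarrow> k - d \<notin> {1..e-1}" "k \<noteq> d"
      using that assms(4,5) by auto
    then show ?thesis using assms(1,2) alphas_eq_0 by (auto simp: alpha_join_def)
  qed
  ultimately show ?thesis by (auto simp: alphas_def le_Suc_eq)
qed

lemma inj_on_alpha_join_left: "inj_on (\<lambda>\<alpha>. alpha_join d \<alpha> v \<beta>) (alphas d)"
proof (intro inj_onI ext)
  fix \<alpha> \<alpha>' k assume "\<alpha> \<in> alphas d" "\<alpha>' \<in> alphas d"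
    and "alpha_join d \<alpha> v \<beta> = alpha_join d \<alpha>' v \<beta>"
  then have "alpha_join d \<alpha> v \<beta> k = alpha_join d \<alpha>' v \<beta> k"
    by simp
  moreover have "\<not> k < d \<Longrightarrow> k \<notin> {1..d-1}"
    by auto
  ultimately show "\<alpha> k = \<alpha>' k"
    using alphas_eq_0[OF \<open>\<alpha> \<in> alphas d\<close>] alphas_eq_0[OF \<open>\<alpha>' \<in> alphas d\<close>]
    by (cases "k < d") (auto simp: alpha_join_def)
qed

lemma inj_on_alpha_join_right: "inj_on (\<lambda>\<beta>. alpha_join d \<alpha> v \<beta>) (alphas e)"
proof (intro inj_onI ext)
  fix \<beta> \<beta>' j assume "\<beta> \<in> alphas e" "\<beta>' \<in> alphas e"
    and "alpha_join d \<alpha> v \<beta> = alpha_join d \<alpha> v \<beta>'"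
  then have "alpha_join d \<alpha> v \<beta> (d + j) = alpha_join d \<alpha> v \<beta>' (d + j)"
    by simp
  then show "\<beta> j = \<beta>' j"
    using alphas_eq_0[OF \<open>\<beta> \<in> alphas e\<close>, of 0] alphas_eq_0[OF \<open>\<beta>' \<in> alphas e\<close>, of 0]
    by (cases "j = 0") (auto simp: alpha_join_def)
qed

lemma pattern_alpha_join:
  assumes "d \<ge> 1" "e \<ge> 1"
  shows "j \<le> d \<Longrightarrow> pattern (d + e) a (alpha_join d \<alpha> v \<beta>) b j = pattern d a \<alpha> v j"
    and "j \<le> e \<Longrightarrow> pattern (d + e) a (alpha_join d \<alpha> v \<beta>) b (d + j) = pattern e v \<beta> b j"
  using assms by (auto simp: pattern_def alpha_join_def)

lemma flattening_alpha_join: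
  assumes "a \<le> 1" "b \<le> 1" "v \<le> 1" "\<alpha> \<in> alphas d" "\<beta> \<in> alphas e" "d \<ge> 1" "e \<ge> 1"
  shows "slice_set 0 (2*d) (Iset (d+e) a (alpha_join d \<alpha> v \<beta>) b) = Iset d a \<alpha> v" (is ?I_low)
    and "slice_set 0 (2*d) (Jset (d+e) a (alpha_join d \<alpha> v \<beta>) b) = Jset d a \<alpha> v" (is ?J_low)
    and "slice_set (2*d) (2*e) (Iset (d+e) a (alpha_join d \<alpha> v \<beta>) b) = Iset e v \<beta> b" (is ?I_high)
    and "slice_set (2*d) (2*e) (Jset (d+e) a (alpha_join d \<alpha> v \<beta>) b) = Jset e v \<beta> b" (is ?J_high)
proof -
  have join: "alpha_join d \<alpha> v \<beta> k \<le> 1" and \<alpha>: "\<alpha> k \<le> 1" and \<beta>: "\<beta> k \<le> 1" for k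
    using assms alphas_le_1 by (simp_all add: alpha_join_def)
  note parity_sets =
    Iset_eq_parity_set[OF assms(1,2) join] Jset_eq_parity_set[OF assms(2) join]
    Iset_eq_parity_set[OF assms(1,3) \<alpha>] Jset_eq_parity_set[OF assms(3) \<alpha>]
    Iset_eq_parity_set[OF assms(3,2) \<beta>] Jset_eq_parity_set[OF assms(2) \<beta>]
  have low: "slice_set 0 (2*d) (parity_set (d+e) \<gamma>) = parity_set d \<gamma>" for \<gamma>
    using slice_set_parity_set[of 0 d "d+e" \<gamma>] by simp
  have high: "slice_set (2*d) (2*e) (parity_set (d+e) \<gamma>) = parity_set e (\<lambda>j. \<gamma> (d + j))" for \<gamma>
    using slice_set_parity_set[of d e "d+e" \<gamma>] by simp
  show ?I_low ?J_low ?I_high ?J_high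
    unfolding parity_sets low high
    by (auto intro!: parity_set_cong simp: pattern_alpha_join[OF assms(6,7)])
qed

lemma card_Iset_or_Jset_zero_le:
  assumes "c \<le> 1"
  shows "card (Iset m c (\<lambda>_. 0) (1 - c)) \<le> m - 1 \<or> card (Jset m c (\<lambda>_. 0) (1 - c)) \<le> m - 1"
proof (cases "c = 0")
  case True
  then have "Iset m c (\<lambda>_. 0) (1 - c) \<subseteq> (\<lambda>k. 2 * k) ` {1..m-1}"
    by (auto simp: Iset_def)
  then show ?thesis by (metis card_atLeastAtMost diff_Suc_1 finite_atLeastAtMost surj_card_le)
next
  case False
  then have "Jset m c (\<lambda>_. 0) (1 - c) \<subseteq> (\<lambda>k. 2 * k + 1) ` {1..m-1}"
    using assms by (auto simp: Jset_def)
  then show ?thesis by (metis card_atLeastAtMost diff_Suc_1 finite_atLeastAtMost surj_card_le)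
qed

lemma relrk_zero: "relrk n m a \<alpha> b (\<lambda>_. 0 :: 'a::field) = 0"
  by (simp add: relrk_def mrank_zero)

lemma divide_power_le_if_le_power_mult:
  fixes M N n :: nat
  assumes "M \<le> n ^ (k - 1) * N" "n \<ge> 1" "k \<ge> 1"
  shows "real M / real n ^ (j + k) \<le> 1 / real n * (real N / real n ^ j)"
proof -
  have "real n ^ (j + k) = real n ^ j * real n ^ (k - 1) * real n"
    using assms(3) by (simp flip: power_add power_Suc2)
  moreover have "real M \<le> real n ^ (k - 1) * real N"
    using assms(1) by (metis of_nat_le_iff of_nat_mult of_nat_power)
  ultimately show ?thesis
    using assms(2) by (simp add: divide_right_mono field_simps)
qed

lemma relrk_tprod_left_le:
  fixes X B :: "(nat \<Rightarrow> nat) \<Rightarrow> 'a::field"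
  assumes "n \<ge> 1" "d \<ge> 1" "e \<ge> 1" "a \<le> 1" "b \<le> 1" "\<alpha> \<in> alphas d"
  shows "relrk n (d + e) a (alpha_join d \<alpha> (1 - b) (\<lambda>_. 0)) b (tprod d e X B)
    \<le> 1 / real n * relrk n d a \<alpha> (1 - b) X"
proof -
  define I where "I = Iset (d + e) a (alpha_join d \<alpha> (1 - b) (\<lambda>_. 0)) b"
  define J where "J = Jset (d + e) a (alpha_join d \<alpha> (1 - b) (\<lambda>_. 0)) b"
  have "(\<lambda>_. 0) \<in> alphas e" by (simp add: alphas_def)
  note flattening = flattening_alpha_join[OF assms(4,5) diff_le_self[of 1 b] assms(6) this assms(2,3),
      folded I_def J_def]
  have "card (slice_set (2*d) (2*e) I) \<le> e - 1 \<or> card (slice_set (2*d) (2*e) J) \<le> e - 1"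
    unfolding flattening using card_Iset_or_Jset_zero_le[of "1 - b" e] assms(5) by simp
  from mrank_slice_product_le[OF assms(1) this, of X 0 "2*d"]
  have "mrank (\<lambda>r c. tprod d e X B (merge I r c)) (asg n I) (asg n J)
    \<le> n ^ (e - 1) * mrank (\<lambda>r c. X (merge (Iset d a \<alpha> (1 - b)) r c))
        (asg n (Iset d a \<alpha> (1 - b))) (asg n (Jset d a \<alpha> (1 - b)))"
    by (simp add: tprod_eq_slices flattening)
  then show ?thesis
    unfolding relrk_def I_def J_def using assms(1,3) by (rule divide_power_le_if_le_power_mult)
qed

lemma relrk_tprod_right_le:
  fixes A X :: "(nat \<Rightarrow> nat) \<Rightarrow> 'a::field"
  assumes "n \<ge> 1" "d \<ge> 1" "e \<ge> 1" "a \<le> 1" "b \<le> 1" "\<beta> \<in> alphas e"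
  shows "relrk n (d + e) a (alpha_join d (\<lambda>_. 0) (1 - a) \<beta>) b (tprod d e A X)
    \<le> 1 / real n * relrk n e (1 - a) \<beta> b X"
proof -
  define I where "I = Iset (d + e) a (alpha_join d (\<lambda>_. 0) (1 - a) \<beta>) b"
  define J where "J = Jset (d + e) a (alpha_join d (\<lambda>_. 0) (1 - a) \<beta>) b"
  have "(\<lambda>_. 0) \<in> alphas d" by (simp add: alphas_def)
  note flattening = flattening_alpha_join[OF assms(4,5) diff_le_self[of 1 a] this assms(6) assms(2,3),
      folded I_def J_def]
  have "card (slice_set 0 (2*d) I) \<le> d - 1 \<or> card (slice_set 0 (2*d) J) \<le> d - 1"
    unfolding flattening using card_Iset_or_Jset_zero_le[of a d] assms(4) by simp
  from mrank_slice_product_le[OF assms(1) this, of X "2*d" "2*e" A]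
  have "mrank (\<lambda>r c. tprod d e A X (merge I r c)) (asg n I) (asg n J)
    \<le> n ^ (d - 1) * mrank (\<lambda>r c. X (merge (Iset e (1 - a) \<beta> b) r c))
        (asg n (Iset e (1 - a) \<beta> b)) (asg n (Jset e (1 - a) \<beta> b))"
    unfolding tprod_eq_slices flattening by (simp only: mult.commute)
  then show ?thesis
    unfolding relrk_def I_def J_def using assms(1,2)
    by (subst add.commute) (rule divide_power_le_if_le_power_mult)
qed

lemma Inf_le_mult_Inf:
  fixes S T :: "real set"
  assumes "T \<noteq> {}" "bdd_below S" "c > 0" "\<And>t. t \<in> T \<Longrightarrow> \<exists>s\<in>S. s \<le> c * t"
  shows "Inf S \<le> c * Inf T"
proof -
  have "Inf S / c \<le> t" if t: "t \<in> T" for t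
  proof -
    obtain s where "s \<in> S" "s \<le> c * t" using assms(4)[OF t] by blast
    then have "Inf S \<le> c * t" using cInf_lower[OF _ assms(2)] by force
    then show ?thesis using assms(3) by (simp add: pos_divide_le_eq mult.commute)
  qed
  then have "Inf S / c \<le> Inf T" by (rule cInf_greatest[OF assms(1)])
  then show ?thesis using assms(3) by (simp add: pos_divide_le_eq mult.commute)
qed

definition decomp_costs :: "nat \<Rightarrow> nat \<Rightarrow> ((nat \<Rightarrow> nat) \<Rightarrow> 'a::field) \<Rightarrow> nat \<Rightarrow> nat \<Rightarrow> real set" where
  "decomp_costs n m C a b = {\<Sum>\<alpha>\<in>alphas m. relrk n m a \<alpha> b (X \<alpha>) | X.
     \<forall>x\<in>asg n {1..2*m}. C x = (\<Sum>\<alpha>\<in>alphas m. X \<alpha> x)}"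

lemma rho_eq_decomp_costs:
  "rho n m C = (MAX a\<in>{0,1::nat}. MAX b\<in>{0,1::nat}. Inf (decomp_costs n m C a b))"
  by (simp add: rho_def decomp_costs_def)

lemma decomp_cost_reindex_mem:
  assumes "finite P" "inj_on \<iota> P" "\<iota> ` P \<subseteq> alphas m"
    and "\<forall>x\<in>asg n {1..2*m}. C x = (\<Sum>\<beta>\<in>P. Z \<beta> x)"
  shows "(\<Sum>\<beta>\<in>P. relrk n m a (\<iota> \<beta>) b (Z \<beta>)) \<in> decomp_costs n m C a b"
proof -
  define X where "X \<alpha> = (if \<alpha> \<in> \<iota> ` P then Z (inv_into P \<iota> \<alpha>) else (\<lambda>_. 0))" for \<alpha>
  have reindex: "(\<Sum>\<alpha>\<in>alphas m. g \<alpha> (X \<alpha>)) = (\<Sum>\<beta>\<in>P. g (\<iota> \<beta>) (Z \<beta>))"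
    if "\<And>\<alpha>. g \<alpha> (\<lambda>_. 0) = 0" for g :: "_ \<Rightarrow> _ \<Rightarrow> 's::comm_monoid_add"
  proof -
    have "(\<Sum>\<alpha>\<in>alphas m. g \<alpha> (X \<alpha>)) = (\<Sum>\<alpha>\<in>\<iota> ` P. g \<alpha> (X \<alpha>))"
      using assms(3) that by (intro sum.mono_neutral_right finite_alphas) (auto simp: X_def)
    also have "\<dots> = (\<Sum>\<beta>\<in>P. g (\<iota> \<beta>) (Z \<beta>))"
      using assms(2) by (simp add: sum.reindex X_def)
    finally show ?thesis .
  qed
  have "(\<Sum>\<alpha>\<in>alphas m. X \<alpha> x) = (\<Sum>\<beta>\<in>P. Z \<beta> x)" for x
    by (rule reindex) simp
  then have "\<forall>x\<in>asg n {1..2*m}. C x = (\<Sum>\<alpha>\<in>alphas m. X \<alpha> x)"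
    using assms(4) by simp
  then have "(\<Sum>\<alpha>\<in>alphas m. relrk n m a \<alpha> b (X \<alpha>)) \<in> decomp_costs n m C a b"
    unfolding decomp_costs_def by blast
  then show ?thesis
    using reindex[of "\<lambda>\<alpha>. relrk n m a \<alpha> b"] by (simp add: relrk_zero)
qed

lemma decomp_costs_nonempty: "decomp_costs n m C a b \<noteq> {}"
proof -
  define X where "X \<alpha> = (if \<alpha> = (\<lambda>_. 0) then C else (\<lambda>_. 0))" for \<alpha> :: "nat \<Rightarrow> nat"
  have "(\<lambda>_. 0) \<in> alphas m"
    by (simp add: alphas_def)
  then have "\<forall>x\<in>asg n {1..2*m}. C x = (\<Sum>\<alpha>\<in>alphas m. X \<alpha> x)"
    by (simp add: X_def if_distrib[of "\<lambda>f. f _"] sum.delta finite_alphas cong: if_cong)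
  then show ?thesis
    unfolding decomp_costs_def by blast
qed

lemma bdd_below_decomp_costs: "bdd_below (decomp_costs n m C a b)"
  by (rule bdd_belowI[of _ 0]) (auto simp: decomp_costs_def relrk_def intro: sum_nonneg)

lemma Inf_decomp_costs_le_rho:
  "a \<in> {0,1} \<Longrightarrow> b \<in> {0,1} \<Longrightarrow> Inf (decomp_costs n m C a b) \<le> rho n m C"
  unfolding rho_eq_decomp_costs by (auto intro: Max.coboundedI order_trans[OF _ Max.coboundedI])

lemma Inf_decomp_costs_transfer_le:
  assumes "c > 0" "inj_on \<iota> (alphas m')" "\<iota> ` alphas m' \<subseteq> alphas m"
    and decomp: "\<And>X. \<forall>x\<in>asg n {1..2*m'}. C' x = (\<Sum>\<alpha>\<in>alphas m'. X \<alpha> x) \<Longrightarrow>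
      \<forall>x\<in>asg n {1..2*m}. C x = (\<Sum>\<alpha>\<in>alphas m'. F (X \<alpha>) x)"
    and relrk: "\<And>\<alpha> Y. \<alpha> \<in> alphas m' \<Longrightarrow> relrk n m a (\<iota> \<alpha>) b (F Y) \<le> c * relrk n m' a' \<alpha> b' Y"
  shows "Inf (decomp_costs n m C a b) \<le> c * Inf (decomp_costs n m' C' a' b')"
proof (rule Inf_le_mult_Inf[OF decomp_costs_nonempty bdd_below_decomp_costs \<open>c > 0\<close>])
  fix t assume "t \<in> decomp_costs n m' C' a' b'"
  then obtain X where t: "t = (\<Sum>\<alpha>\<in>alphas m'. relrk n m' a' \<alpha> b' (X \<alpha>))"
    and "\<forall>x\<in>asg n {1..2*m'}. C' x = (\<Sum>\<alpha>\<in>alphas m'. X \<alpha> x)"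
    unfolding decomp_costs_def by blast
  then have "(\<Sum>\<alpha>\<in>alphas m'. relrk n m a (\<iota> \<alpha>) b (F (X \<alpha>))) \<in> decomp_costs n m C a b"
    by (intro decomp_cost_reindex_mem finite_alphas assms(2,3) decomp)
  moreover have "(\<Sum>\<alpha>\<in>alphas m'. relrk n m a (\<iota> \<alpha>) b (F (X \<alpha>))) \<le> c * t"
    unfolding t sum_distrib_left by (intro sum_mono relrk)
  ultimately show "\<exists>s\<in>decomp_costs n m C a b. s \<le> c * t" by blast
qed

lemma Inf_decomp_costs_tprod_left_le:
  fixes A B :: "(nat \<Rightarrow> nat) \<Rightarrow> 'a::field"
  assumes "n \<ge> 1" "d \<ge> 1" "e \<ge> 1" "a \<le> 1" "b \<le> 1"
  shows "Inf (decomp_costs n (d + e) (tprod d e A B) a b) \<le> 1 / real n * Inf (decomp_costs n d A a (1 - b))"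
proof (rule Inf_decomp_costs_transfer_le[where \<iota> = "\<lambda>\<alpha>. alpha_join d \<alpha> (1 - b) (\<lambda>_. 0)"
      and F = "\<lambda>Y. tprod d e Y B"])
  have "(\<lambda>_. 0) \<in> alphas e" by (simp add: alphas_def)
  then show "(\<lambda>\<alpha>. alpha_join d \<alpha> (1 - b) (\<lambda>_. 0)) ` alphas d \<subseteq> alphas (d + e)"
    using assms by (auto intro!: alpha_join_alphas)
  show "0 < 1 / real n"
    using assms(1) by simp
  show "inj_on (\<lambda>\<alpha>. alpha_join d \<alpha> (1 - b) (\<lambda>_. 0)) (alphas d)"
    by (rule inj_on_alpha_join_left)
qed (erule tprod_sum_left, erule relrk_tprod_left_le[OF assms])

lemma Inf_decomp_costs_tprod_right_le:
  fixes A B :: "(nat \<Rightarrow> nat) \<Rightarrow> 'a::field"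
  assumes "n \<ge> 1" "d \<ge> 1" "e \<ge> 1" "a \<le> 1" "b \<le> 1"
  shows "Inf (decomp_costs n (d + e) (tprod d e A B) a b) \<le> 1 / real n * Inf (decomp_costs n e B (1 - a) b)"
proof (rule Inf_decomp_costs_transfer_le[where \<iota> = "\<lambda>\<beta>. alpha_join d (\<lambda>_. 0) (1 - a) \<beta>"
      and F = "\<lambda>Y. tprod d e A Y"])
  have "(\<lambda>_. 0) \<in> alphas d" by (simp add: alphas_def)
  then show "(\<lambda>\<beta>. alpha_join d (\<lambda>_. 0) (1 - a) \<beta>) ` alphas e \<subseteq> alphas (d + e)"
    using assms by (auto intro!: alpha_join_alphas)
  show "0 < 1 / real n"
    using assms(1) by simp
  show "inj_on (\<lambda>\<beta>. alpha_join d (\<lambda>_. 0) (1 - a) \<beta>) (alphas e)"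
    by (rule inj_on_alpha_join_right)
qed (erule tprod_sum_right, erule relrk_tprod_right_le[OF assms])

theorem lemma4p9:
  fixes A B :: "(nat \<Rightarrow> nat) \<Rightarrow> 'a::field" and n d e :: nat
  assumes "n \<ge> 1" and "d \<ge> 1" and "e \<ge> 1"
  shows "rho n (d + e) (tprod d e A B) \<le> (1 / real n) * min (rho n d A) (rho n e B)"
proof -
  let ?Inf_AB = "\<lambda>a b. Inf (decomp_costs n (d + e) (tprod d e A B) a b)"
  have "?Inf_AB a b \<le> 1 / real n * min (rho n d A) (rho n e B)" if "a \<in> {0,1}" "b \<in> {0,1}" for a b
  proof -
    have "?Inf_AB a b \<le> 1 / real n * Inf (decomp_costs n d A a (1 - b))"
      using assms that by (intro Inf_decomp_costs_tprod_left_le) auto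
    also have "\<dots> \<le> 1 / real n * rho n d A"
      using that by (intro mult_left_mono Inf_decomp_costs_le_rho) auto
    finally have "?Inf_AB a b \<le> 1 / real n * rho n d A" .
    moreover have "?Inf_AB a b \<le> 1 / real n * Inf (decomp_costs n e B (1 - a) b)"
      using assms that by (intro Inf_decomp_costs_tprod_right_le) auto
    moreover have "\<dots> \<le> 1 / real n * rho n e B"
      using that by (intro mult_left_mono Inf_decomp_costs_le_rho) auto
    ultimately show ?thesis
      by simp
  qed
  then show ?thesis
    by (simp add: rho_eq_decomp_costs[of n "d + e"])
qed

end
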